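(* Let $(\Gamma,\mathfrak o,\mathfrak m,\mathfrak q)$ be a quantized Brauer graph such that $\Gamma$ is not the graph $\mathbb A_2$ (a single edge with two distinct endpoints), and let $A_\Gamma=KQ_\Gamma/I_\Gamma$ be the associated Brauer graph algebra. Let $\rho\subseteq\rho_\Gamma$ be a minimal generating set of $I_\Gamma$ chosen from the set $\rho_\Gamma$ of Brauer graph relations. Then $\rho$ contains all the relations of type one and all the relations of type three, and $\rho$ contains the relation of type two associated to an edge $s$ truncated at a vertex $\alpha$ if and only if the successor $s_1$ of $s$ at its other endpoint $\beta$ is also a truncated edge (i.e. $s_1$ is truncated at its other endpoint).
   Context: Let $K$ be a field. A Brauer graph $(\Gamma,\mathfrak o,\mathfrak m)$ consists of a finite connected graph $\Gamma$ with at least one edge (loops and multiple edges allowed), a multiplicity function $\mathfrak m:\Gamma_0\to\mathbb Z_{>0}$ on the vertex set $\Gamma_0$, and, for each vertex $\alpha$, a cyclic ordering $\mathfrak o$ of the edges incident with $\alpha$ (a loop at $\alpha$ occurs twice in this cyclic ordering, the two occurrences being treated as distinct). The valency $\mathrm{val}(\alpha)$ is the number of edges incident with $\alpha$, loops counted twice. An edge $t$ is the successor of $s$ at $\alpha$ if $t$ directly follows $s$ in the cyclic ordering at $\alpha$ (if $\mathrm{val}(\alpha)=1$ the unique edge is its own successor). An edge $s$ is truncated at $\alpha$ if $\mathrm{val}(\alpha)=1$, $\mathfrak m(\alpha)=1$ and $s$ is the edge at $\alpha$; $s$ is a truncated edge if it is truncated at one of its endpoints. The successor sequence of $s$ at $\alpha$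 is $s=s_0,s_1,\dots,s_{\mathrm{val}(\alpha)-1}$ with $s_{i+1}$ the successor of $s_i$ at $\alpha$. A quantizing function $\mathfrak q$ assigns $\mathfrak q_{s,\alpha}\in K\setminus\{0\}$ to each pair $(s,\alpha)$ with $s$ incident with $\alpha$ and $s$ not truncated at either endpoint; $(\Gamma,\mathfrak o,\mathfrak m,\mathfrak q)$ is a quantized Brauer graph. The Brauer graph algebra $A_\Gamma=KQ_\Gamma/I_\Gamma$ (paths written left to right) is: if $\Gamma=\mathbb A_2$ with both multiplicities $1$, $A_\Gamma=K[x]/(x^2)$. Otherwise $Q_\Gamma$ has a vertex $v_s$ for each edge $s$, and for each vertex $\alpha$ and each occurrence of $t$ as the successor of $s$ at $\alpha$ with $s$ not truncated at $\alpha$, an arrow $v_s\to v_t$. For $s$ at $\alpha$ not truncated at $\alpha$, with successor sequence $s_0,\dots,s_{v-1}$, $v=\mathrm{val}(\alpha)$, $s_v=s_0$, let $C_{s,\alpha}=a_0a_1\cdots a_{v-1}$, where $a_r$ is the arrow for $s_{r+1}$ succeeding $s_r$ at $\alpha$. The set $\rho_\Gamma$ of Brauer graph relations consists of: type one: for each edge $s$ with endpoints $\alpha,\beta$ not truncated at either, $\mathfrak q_{s,\alpha}C_{s,\alpha}^{\mathfrak m(\alpha)}-\mathfrak q_{s,\beta}C_{s,\beta}^{\mathfrak m(\beta)}$; type two: for each edge $s$ truncated at $\alpha$ with other endpoint $\beta$, writing $C_{s,\beta}=b_0b_1\cdots b_{\mathrm{val}(\beta)-1}$, the path $C_{s,\beta}^{\mathfrak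 m(\beta)}b_0$; type three: each path $ab$ of length $2$ in $Q_\Gamma$ that is not a subpath of any $C_{t,\gamma}$. $I_\Gamma$ is the ideal generated by $\rho_\Gamma$. *)

theory Defs
  imports Main
begin

text \<open>A Brauer graph is encoded by its half-edges (occurrences of edges at vertices).
  hes: finite set of half-edges; vtx h: the vertex at which the occurrence h sits;
  iota: fixed-point-free involution pairing the two half-edges of an edge;
  succ: the cyclic ordering (succ h is the occurrence following h at vtx h);
  mult: multiplicity function on vertices.\<close>

record ('h, 'v) bgraph =
  hes   :: "'h set"
  verts :: "'v set"
  vtx   :: "'h \<Rightarrow> 'v"
  iota  :: "'h \<Rightarrow> 'h"
  succ  :: "'h \<Rightarrow> 'h"
  mult  :: "'v \<Rightarrow> nat"

definition edge_rel :: "('h, 'v) bgraph \<Rightarrow> ('v \<times> 'v) set" where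
  "edge_rel G = {(vtx G h, vtx G (iota G h)) | h. h \<in> hes G}"

definition brauer_graph :: "('h, 'v) bgraph \<Rightarrow> bool" where
  "brauer_graph G \<longleftrightarrow>
     finite (hes G) \<and> hes G \<noteq> {} \<and> vtx G ` hes G = verts G \<and>
     (\<forall>h\<in>hes G. iota G h \<in> hes G \<and> iota G h \<noteq> h \<and> iota G (iota G h) = h) \<and>
     bij_betw (succ G) (hes G) (hes G) \<and>
     (\<forall>h\<in>hes G. vtx G (succ G h) = vtx G h) \<and>
     (\<forall>h\<in>hes G. \<forall>h'\<in>hes G. vtx G h' = vtx G h \<longrightarrow> (\<exists>n. (succ G ^^ n) h = h')) \<and>
     (\<forall>v\<in>verts G. mult G v > 0) \<and>
     (\<forall>a\<in>verts G. \<forall>b\<in>verts G. (a, b) \<in> (edge_rel G)\<^sup>*)"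

definition valency :: "('h, 'v) bgraph \<Rightarrow> 'v \<Rightarrow> nat" where
  "valency G v = card {h \<in> hes G. vtx G h = v}"

definition trunc :: "('h, 'v) bgraph \<Rightarrow> 'h \<Rightarrow> bool" where
  "trunc G h \<longleftrightarrow> valency G (vtx G h) = 1 \<and> mult G (vtx G h) = 1"

definition hedge :: "('h, 'v) bgraph \<Rightarrow> 'h \<Rightarrow> 'h set" where
  "hedge G h = {h, iota G h}"

definition edges :: "('h, 'v) bgraph \<Rightarrow> 'h set set" where
  "edges G = hedge G ` hes G"

definition is_A2 :: "('h, 'v) bgraph \<Rightarrow> bool" where
  "is_A2 G \<longleftrightarrow> card (hes G) = 2 \<and> (\<forall>h\<in>hes G. vtx G (iota G h) \<noteq> vtx G h)"

text \<open>Quantizing function: a nonzero scalar for each pair (s, alpha) with s not truncated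
  at either endpoint; for a loop the pair (s, alpha) is a single pair, so both
  occurrences carry the same value.\<close>
definition quantizing :: "('h, 'v) bgraph \<Rightarrow> ('h \<Rightarrow> 'k::field) \<Rightarrow> bool" where
  "quantizing G q \<longleftrightarrow>
     (\<forall>h\<in>hes G. \<not> trunc G h \<and> \<not> trunc G (iota G h) \<longrightarrow>
        q h \<noteq> 0 \<and> (vtx G (iota G h) = vtx G h \<longrightarrow> q (iota G h) = q h))"

text \<open>Vertices of the quiver: edges of Gamma. Arrows: half-edges h that are not truncated;
  the arrow h goes from hedge h to hedge (succ h). Paths (written left to right) are pairs
  (start vertex, list of arrows).\<close>

definition arrows :: "('h, 'v) bgraph \<Rightarrow> 'h set" where
  "arrows G = {h \<in> hes G. \<not> trunc G h}"

definition valid_path :: "('h, 'v) bgraph \<Rightarrow> 'h set \<times> 'h list \<Rightarrow> bool" where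
  "valid_path G p \<longleftrightarrow>
     fst p \<in> edges G \<and> set (snd p) \<subseteq> arrows G \<and>
     (snd p \<noteq> [] \<longrightarrow> hedge G (hd (snd p)) = fst p) \<and>
     (\<forall>i. Suc i < length (snd p) \<longrightarrow>
        hedge G (succ G (snd p ! i)) = hedge G (snd p ! Suc i))"

definition ptgt :: "('h, 'v) bgraph \<Rightarrow> 'h set \<times> 'h list \<Rightarrow> 'h set" where
  "ptgt G p = (if snd p = [] then fst p else hedge G (succ G (last (snd p))))"

definition KQ :: "('h, 'v) bgraph \<Rightarrow> ('h set \<times> 'h list \<Rightarrow> 'k::field) set" where
  "KQ G = {f. finite {p. f p \<noteq> 0} \<and> (\<forall>p. f p \<noteq> 0 \<longrightarrow> valid_path G p)}"

definition pmult :: "('h, 'v) bgraph \<Rightarrow> ('h set \<times> 'h list \<Rightarrow> 'k::field)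
     \<Rightarrow> ('h set \<times> 'h list \<Rightarrow> 'k) \<Rightarrow> ('h set \<times> 'h list \<Rightarrow> 'k)" where
  "pmult G f g = (\<lambda>p. if valid_path G p then
      (\<Sum>i\<le>length (snd p). f (fst p, take i (snd p)) *
           g (ptgt G (fst p, take i (snd p)), drop i (snd p)))
    else 0)"

inductive_set gen_ideal :: "('h, 'v) bgraph \<Rightarrow> ('h set \<times> 'h list \<Rightarrow> 'k::field) set
     \<Rightarrow> ('h set \<times> 'h list \<Rightarrow> 'k) set"
  for G S where
  gen: "r \<in> S \<Longrightarrow> r \<in> gen_ideal G S"
| zero: "(\<lambda>_. 0) \<in> gen_ideal G S"
| add: "a \<in> gen_ideal G S \<Longrightarrow> b \<in> gen_ideal G S \<Longrightarrow> (\<lambda>p. a p + b p) \<in> gen_ideal G S"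
| lmult: "a \<in> gen_ideal G S \<Longrightarrow> x \<in> KQ G \<Longrightarrow> pmult G x a \<in> gen_ideal G S"
| rmult: "a \<in> gen_ideal G S \<Longrightarrow> x \<in> KQ G \<Longrightarrow> pmult G a x \<in> gen_ideal G S"

definition pvec :: "'h set \<times> 'h list \<Rightarrow> 'h set \<times> 'h list \<Rightarrow> 'k::field" where
  "pvec p = (\<lambda>p'. if p' = p then 1 else 0)"

text \<open>Arrows of C_{s,alpha} for the occurrence h of s at alpha = vtx h, and of its
  m(alpha)-th power.\<close>
definition cyc :: "('h, 'v) bgraph \<Rightarrow> 'h \<Rightarrow> 'h list" where
  "cyc G h = map (\<lambda>i. (succ G ^^ i) h) [0..<valency G (vtx G h)]"

definition cycpow :: "('h, 'v) bgraph \<Rightarrow> 'h \<Rightarrow> 'h list" where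
  "cycpow G h = concat (replicate (mult G (vtx G h)) (cyc G h))"

definition rel1 :: "('h, 'v) bgraph \<Rightarrow> ('h \<Rightarrow> 'k::field) \<Rightarrow> 'h
     \<Rightarrow> 'h set \<times> 'h list \<Rightarrow> 'k" where
  "rel1 G q h = (\<lambda>p. q h * pvec (hedge G h, cycpow G h) p
                    - q (iota G h) * pvec (hedge G h, cycpow G (iota G h)) p)"

text \<open>Type two relation for the edge of h, truncated at vtx h, with beta = vtx (iota h):
  C_{s,beta}^m(beta) b_0.\<close>
definition rel2 :: "('h, 'v) bgraph \<Rightarrow> 'h \<Rightarrow> 'h set \<times> 'h list \<Rightarrow> 'k::field" where
  "rel2 G h = pvec (hedge G h, cycpow G (iota G h) @ [iota G h])"

definition cyc_subpath :: "('h, 'v) bgraph \<Rightarrow> 'h \<Rightarrow> 'h \<Rightarrow> bool" where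
  "cyc_subpath G a b \<longleftrightarrow>
     (\<exists>g\<in>arrows G. \<exists>xs ys. cycpow G g = xs @ [a, b] @ ys)"

definition type3 :: "('h, 'v) bgraph \<Rightarrow> 'h \<Rightarrow> 'h \<Rightarrow> bool" where
  "type3 G a b \<longleftrightarrow> a \<in> arrows G \<and> b \<in> arrows G \<and>
     hedge G (succ G a) = hedge G b \<and> \<not> cyc_subpath G a b"

definition rel3 :: "('h, 'v) bgraph \<Rightarrow> 'h \<Rightarrow> 'h \<Rightarrow> 'h set \<times> 'h list \<Rightarrow> 'k::field" where
  "rel3 G a b = pvec (hedge G a, [a, b])"

definition brauer_relations :: "('h, 'v) bgraph \<Rightarrow> ('h \<Rightarrow> 'k::field)
     \<Rightarrow> ('h set \<times> 'h list \<Rightarrow> 'k) set" where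
  "brauer_relations G q =
     {rel1 G q h | h. h \<in> hes G \<and> \<not> trunc G h \<and> \<not> trunc G (iota G h)}
   \<union> {rel2 G h | h. h \<in> hes G \<and> trunc G h}
   \<union> {rel3 G a b | a b. type3 G a b}"

definition minimal_generating_set :: "('h, 'v) bgraph \<Rightarrow> ('h \<Rightarrow> 'k::field)
     \<Rightarrow> ('h set \<times> 'h list \<Rightarrow> 'k) set \<Rightarrow> bool" where
  "minimal_generating_set G q \<rho> \<longleftrightarrow>
     \<rho> \<subseteq> brauer_relations G q \<and>
     gen_ideal G \<rho> = gen_ideal G (brauer_relations G q) \<and>
     (\<forall>\<rho>'. \<rho>' \<subset> \<rho> \<longrightarrow> gen_ideal G \<rho>' \<noteq> gen_ideal G (brauer_relations G q))"

end

theory Submission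
  imports Defs "HOL-Library.Sublist" "HOL-Combinatorics.Permutations" "HOL-Combinatorics.Orbits"
begin

text \<open>Every Brauer graph relation is supported on the path C_{s,alpha}^m (possibly together with
  C_{s,beta}^m), on C_{s,beta}^m b_0, or on a path of length two, and an element of the ideal
  generated by a set of relations vanishes on every subpath of a path on which all generators
  vanish. Hence a relation whose support path has no support path of another relation as a
  subpath cannot be dropped from a generating set; this is the case for the relations of type one
  and three, and for the type two relation of s truncated at alpha when the successor s_1 of s at
  beta is truncated as well. If s_1 is not truncated, then C_{s,beta}^m b_0 = b_0 C_{s_1,beta}^m
  is a linear combination of b_0 times the type one relation of s_1 and of the type three
  relation b_0 b_1' (b_1' the arrow leaving s_1 at its other endpoint) followed by the rest of the
  cycle there, so the type two relation is redundant. The hypothesis that Gamma is not A_2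
  guarantees that s is not truncated at beta, so that b_0 is an arrow.\<close>

section \<open>Paths and ideals of the path algebra\<close>

abbreviation succ_chain :: "('h, 'v) bgraph \<Rightarrow> 'h list \<Rightarrow> bool" where
  "succ_chain G \<equiv> successively (\<lambda>x y. y = succ G x)"

lemma succ_chain_sublist_pair: "succ_chain G L \<Longrightarrow> sublist [a, b] L \<Longrightarrow> b = succ G a"
  by (auto simp: sublist_def successively_append_iff)

lemma sublist_length_ge_imp_eq: "sublist xs ys \<Longrightarrow> length ys \<le> length xs \<Longrightarrow> xs = ys"
  by (auto simp: sublist_def)

lemma gen_ideal_least:
  assumes "S \<subseteq> gen_ideal G T"
  shows "gen_ideal G S \<subseteq> gen_ideal G T"
proof
  fix x assume "x \<in> gen_ideal G S"
  then show "x \<in> gen_ideal G T" by induction (use assms in \<open>auto intro: gen_ideal.intros\<close>)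
qed

lemma gen_ideal_mono: "S \<subseteq> T \<Longrightarrow> gen_ideal G S \<subseteq> gen_ideal G T"
  by (rule gen_ideal_least) (auto intro: gen_ideal.gen)

lemma gen_ideal_vanishes_on_sublists:
  assumes gens: "\<forall>s\<in>S. \<forall>p. sublist (snd p) L \<longrightarrow> s p = 0"
    and f: "f \<in> gen_ideal G S" and p: "sublist (snd p) L"
  shows "f p = 0"
  using f p
proof (induction f arbitrary: p rule: gen_ideal.induct)
  case (gen r)
  then show ?case using gens by blast
next
  case (lmult a x)
  have "sublist (drop i (snd p)) L" for i
    using lmult.prems by (meson sublist_order.order.trans suffix_drop suffix_imp_sublist)
  then show ?case using lmult.IH by (simp add: pmult_def)
next
  case (rmult a x)
  have "sublist (take i (snd p)) L" for i
    using rmult.prems by (meson sublist_order.order.trans sublist_take)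
  then show ?case using rmult.IH by (simp add: pmult_def)
qed simp_all

lemma gen_ideal_eq_generator_meets:
  assumes eq: "gen_ideal G \<rho> = gen_ideal G S" and sub: "\<rho> \<subseteq> S"
    and r: "r \<in> S" "r (e, L) \<noteq> 0"
    and vanish: "\<forall>s\<in>S - X. \<forall>p. sublist (snd p) L \<longrightarrow> s p = 0"
  shows "\<rho> \<inter> X \<noteq> {}"
proof
  assume "\<rho> \<inter> X = {}"
  with sub have "gen_ideal G \<rho> \<subseteq> gen_ideal G (S - X)" by (intro gen_ideal_mono) blast
  with eq r(1) have "r \<in> gen_ideal G (S - X)" by (blast intro: gen_ideal.gen)
  then have "r (e, L) = 0"
    using gen_ideal_vanishes_on_sublists[OF vanish, of r G "(e, L)"] by simp
  with r(2) show False ..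
qed

lemma minimal_generating_set_irredundant:
  assumes mg: "minimal_generating_set G q \<rho>" and r: "r \<in> \<rho>"
  shows "r \<notin> gen_ideal G (\<rho> - {r})"
proof
  assume "r \<in> gen_ideal G (\<rho> - {r})"
  then have "\<rho> \<subseteq> gen_ideal G (\<rho> - {r})" by (auto intro: gen_ideal.gen)
  then have "gen_ideal G (\<rho> - {r}) = gen_ideal G \<rho>"
    by (intro antisym gen_ideal_least gen_ideal_mono) auto
  moreover have "\<rho> - {r} \<subset> \<rho>" using r by blast
  ultimately show False using mg unfolding minimal_generating_set_def by metis
qed

lemma pmult_scale_left: "pmult G (\<lambda>p. c * f p) g = (\<lambda>p. c * pmult G f g p)"
  by (simp add: pmult_def sum_distrib_left mult.assoc fun_eq_iff)

lemma pmult_scale_right: "pmult G f (\<lambda>p. c * g p) = (\<lambda>p. c * pmult G f g p)"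
  by (simp add: pmult_def sum_distrib_left algebra_simps fun_eq_iff)

lemma pmult_diff_right:
  "pmult G f (\<lambda>p. g p - h p) = (\<lambda>p. pmult G f g p - pmult G f h p)"
  by (simp add: pmult_def sum_subtractf right_diff_distrib fun_eq_iff)

lemma pmult_pvec_pvec:
  "pmult G (pvec (e, xs)) (pvec (e', ys)) =
     (if valid_path G (e, xs @ ys) \<and> e' = ptgt G (e, xs) then pvec (e, xs @ ys) else (\<lambda>_. 0))"
proof (rule ext)
  fix p :: "'a set \<times> 'a list"
  obtain f l where p: "p = (f, l)" by fastforce
  let ?C = "f = e \<and> l = xs @ ys \<and> e' = ptgt G (e, xs)"
  have "pvec (e, xs) (f, take i l) * pvec (e', ys) (ptgt G (f, take i l), drop i l) =
      (if i = length xs then if ?C then 1 else 0 else 0)" if "i \<le> length l" for i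
  proof (cases "i = length xs")
    case True
    then have "take i l = xs \<and> drop i l = ys \<longleftrightarrow> l = xs @ ys" by (metis append_eq_conv_conj)
    then show ?thesis by (auto simp: pvec_def True)
  next
    case False
    then have "take i l \<noteq> xs" using that by auto
    then show ?thesis by (simp add: pvec_def False)
  qed
  note summand = this
  have "(\<Sum>i\<le>length l. pvec (e, xs) (f, take i l) * pvec (e', ys) (ptgt G (f, take i l), drop i l))
      = (\<Sum>i\<le>length l. if i = length xs then if ?C then 1 else 0 else 0)"
    by (rule sum.cong) (simp_all add: summand)
  also have "\<dots> = (if ?C then 1 else 0)" by (simp add: sum.delta)
  finally have sum: "(\<Sum>i\<le>length l. pvec (e, xs) (f, take i l) * pvec (e', ys) (ptgt G (f, take i l), drop i l))
      = (if ?C then 1 else 0)" .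
  show "pmult G (pvec (e, xs)) (pvec (e', ys)) p =
      (if valid_path G (e, xs @ ys) \<and> e' = ptgt G (e, xs) then pvec (e, xs @ ys) else (\<lambda>_. 0)) p"
    unfolding pmult_def p prod.sel sum by (auto simp: pvec_def)
qed

lemma KQ_scaled_pvec:
  assumes "valid_path G P"
  shows "(\<lambda>p. c * pvec P p) \<in> KQ G"
proof -
  have "{p. c * pvec P p \<noteq> 0} \<subseteq> {P}" by (auto simp: pvec_def)
  then have "finite {p. c * pvec P p \<noteq> 0}" by (rule finite_subset) simp
  moreover have "\<forall>p. c * pvec P p \<noteq> 0 \<longrightarrow> valid_path G p" using assms by (simp add: pvec_def)
  ultimately show ?thesis by (simp add: KQ_def)
qed

lemma valid_path_Cons:
  assumes x: "x \<in> arrows G" and xs: "valid_path G (hedge G (succ G x), xs)"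
  shows "valid_path G (hedge G x, x # xs)"
proof -
  have "hedge G x \<in> edges G" using x by (simp add: arrows_def edges_def)
  moreover have "hedge G (succ G x) = hedge G (hd xs)" if "xs \<noteq> []"
    using xs that by (simp add: valid_path_def)
  ultimately show ?thesis
    using x xs by (auto simp: valid_path_def nth_Cons hd_conv_nth split: nat.split)
qed

lemma valid_path_succ_chain:
  "xs \<noteq> [] \<Longrightarrow> succ_chain G xs \<Longrightarrow> set xs \<subseteq> arrows G \<Longrightarrow> valid_path G (hedge G (hd xs), xs)"
proof (induction xs rule: induct_list012)
  case (3 x y zs)
  then have "valid_path G (hedge G (succ G x), y # zs)" by (auto simp: successively_Cons)
  with 3 show ?case by (simp add: valid_path_Cons)
qed (auto simp: valid_path_def arrows_def edges_def)

section \<open>Cycles of half-edges around a vertex\<close>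

text \<open>The record field is written bgraph.mult since HOL-Combinatorics brings Multiset.mult
  into scope.\<close>

lemma cycpow_length: "length (cycpow G h) = bgraph.mult G (vtx G h) * valency G (vtx G h)"
  by (simp add: cycpow_def cyc_def length_concat sum_list_replicate)

lemma trunc_cong_vtx: "vtx G x = vtx G y \<Longrightarrow> trunc G x = trunc G y"
  by (simp add: trunc_def)

lemma rel2_short_path:
  "length (snd p) \<le> length (cycpow G (iota G h)) \<Longrightarrow> rel2 G h p = 0"
  by (auto simp: rel2_def pvec_def)

lemma cycpow_same_length: "vtx G x = vtx G y \<Longrightarrow> length (cycpow G x) = length (cycpow G y)"
  by (simp add: cycpow_length)

context
  fixes G :: "('h, 'v) bgraph"
  assumes bg: "brauer_graph G"
begin

lemma succ_in_hes: "h \<in> hes G \<Longrightarrow> succ G h \<in> hes G"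
  using bg unfolding brauer_graph_def by (meson bij_betw_apply)

lemma vtx_succ: "h \<in> hes G \<Longrightarrow> vtx G (succ G h) = vtx G h"
  using bg unfolding brauer_graph_def by blast

lemma iota_in_hes: "h \<in> hes G \<Longrightarrow> iota G h \<in> hes G"
  and iota_neq: "h \<in> hes G \<Longrightarrow> iota G h \<noteq> h"
  and iota_iota: "h \<in> hes G \<Longrightarrow> iota G (iota G h) = h"
  using bg unfolding brauer_graph_def by blast+

lemma funpow_succ_in_hes: "h \<in> hes G \<Longrightarrow> (succ G ^^ n) h \<in> hes G"
  and vtx_funpow_succ: "h \<in> hes G \<Longrightarrow> vtx G ((succ G ^^ n) h) = vtx G h"
  by (induction n) (auto simp: succ_in_hes vtx_succ)

lemma succ_transitive:
  "h \<in> hes G \<Longrightarrow> h' \<in> hes G \<Longrightarrow> vtx G h' = vtx G h \<Longrightarrow> \<exists>n. (succ G ^^ n) h = h'"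
  using bg unfolding brauer_graph_def by blast

lemma succ_periodic:
  assumes h: "h \<in> hes G"
  obtains n where "n > 0" "(succ G ^^ n) h = h"
proof -
  let ?f = "perm_restrict (succ G) (hes G)"
  have "bij_betw ?f (hes G) (hes G)"
    using bg unfolding brauer_graph_def by (auto simp: perm_restrict_simps cong: bij_betw_cong)
  then have "?f permutes hes G"
    by (rule bij_imp_permutes) (simp add: perm_restrict_simps)
  then have "permutation ?f"
    using bg unfolding brauer_graph_def by (blast intro: permutes_imp_permutation)
  then obtain n where n: "n > 0" "(?f ^^ n) h = h" by (rule permutation_self)
  have "(?f ^^ m) h = (succ G ^^ m) h" for m
    by (induction m) (simp_all add: perm_restrict_simps funpow_succ_in_hes h)
  with n that show ?thesis by simp
qed

lemma orbit_succ:
  assumes h: "h \<in> hes G"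
  shows "orbit (succ G) h = {x \<in> hes G. vtx G x = vtx G h}"
proof -
  obtain n where "n > 0" "(succ G ^^ n) h = h" using succ_periodic[OF h] .
  then have "h \<in> orbit (succ G) h" by (auto simp: orbit_altdef) metis
  then have "orbit (succ G) h = range (\<lambda>n. (succ G ^^ n) h)"
    by (subst orbit_altdef_self_in) (simp_all add: full_SetCompr_eq)
  also have "\<dots> = {x \<in> hes G. vtx G x = vtx G h}"
    using h by (auto simp: funpow_succ_in_hes vtx_funpow_succ) (metis rangeI succ_transitive)
  finally show ?thesis .
qed

lemma valency_eq_funpow_dist1:
  assumes h: "h \<in> hes G"
  shows "valency G (vtx G h) = funpow_dist1 (succ G) h h"
proof -
  have "h \<in> orbit (succ G) h" using h by (simp add: orbit_succ)
  then have "card (orbit (succ G) h) = funpow_dist1 (succ G) h h"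
    by (subst orbit_conv_funpow_dist1) (simp_all add: card_image inj_on_funpow_dist1)
  then show ?thesis by (simp add: valency_def orbit_succ h)
qed

lemma funpow_valency:
  assumes h: "h \<in> hes G"
  shows "(succ G ^^ valency G (vtx G h)) h = h"
proof -
  have "h \<in> orbit (succ G) h" using h by (simp add: orbit_succ)
  then show ?thesis unfolding valency_eq_funpow_dist1[OF h] by (rule funpow_dist1_prop)
qed

lemma valency_pos: "h \<in> hes G \<Longrightarrow> 0 < valency G (vtx G h)"
  by (simp add: valency_eq_funpow_dist1)

lemma mult_pos: "h \<in> hes G \<Longrightarrow> 0 < bgraph.mult G (vtx G h)"
  using bg unfolding brauer_graph_def by blast

lemma cycpow_nth:
  assumes h: "h \<in> hes G" and i: "i < length (cycpow G h)"
  shows "cycpow G h ! i = (succ G ^^ i) h"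
proof -
  let ?v = "valency G (vtx G h)"
  have "concat (replicate m (cyc G h)) ! i = (succ G ^^ (i mod ?v)) h" if "i < m * ?v" for m
    using that
  proof (induction m arbitrary: i)
    case (Suc m)
    then show ?case
      by (cases "i < ?v") (auto simp: cyc_def nth_append le_mod_geq)
  qed simp
  moreover have "i < bgraph.mult G (vtx G h) * ?v" using i by (simp add: cycpow_length)
  ultimately show ?thesis
    by (simp add: cycpow_def funpow_mod_eq[OF funpow_valency[OF h]])
qed

lemma cycpow_snoc_eq_map:
  assumes h: "h \<in> hes G"
  shows "cycpow G h @ [h] = map (\<lambda>i. (succ G ^^ i) h) [0..<Suc (length (cycpow G h))]"
proof -
  have "(succ G ^^ length (cycpow G h)) h = h"
    using funpow_mod_eq[OF funpow_valency[OF h], of "length (cycpow G h)"]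
    by (simp add: cycpow_length)
  then show ?thesis
    by (auto intro!: nth_equalityI simp: nth_append cycpow_nth[OF h] less_Suc_eq)
qed

lemma cycpow_ne: "h \<in> hes G \<Longrightarrow> cycpow G h \<noteq> []"
  using mult_pos[of h] valency_pos[of h] by (simp add: cycpow_length flip: length_greater_0_conv)

lemma hd_cycpow: "h \<in> hes G \<Longrightarrow> hd (cycpow G h) = h"
  by (simp add: hd_conv_nth cycpow_ne cycpow_nth)

lemma set_cycpow_snoc:
  "h \<in> hes G \<Longrightarrow> x \<in> set (cycpow G h @ [h]) \<Longrightarrow> x \<in> hes G \<and> vtx G x = vtx G h"
  by (auto simp: cycpow_snoc_eq_map funpow_succ_in_hes vtx_funpow_succ simp del: upt_Suc)

lemma succ_chain_cycpow_snoc: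
  assumes h: "h \<in> hes G"
  shows "succ_chain G (cycpow G h @ [h])"
proof -
  have "succ_chain G (map (\<lambda>i. (succ G ^^ i) h) [0..<k])" for k
  proof (induction k)
    case (Suc k)
    then show ?case by (cases k) (auto simp: successively_append_iff last_map)
  qed simp
  then show ?thesis by (simp only: cycpow_snoc_eq_map[OF h])
qed

lemma cycpow_snoc:
  assumes h: "h \<in> hes G"
  shows "cycpow G h @ [h] = h # cycpow G (succ G h)"
  by (auto intro!: nth_equalityI simp: cycpow_snoc_eq_map[OF h] cycpow_nth[OF succ_in_hes[OF h]]
      cycpow_same_length[OF vtx_succ[OF h]] nth_Cons funpow_swap1 split: nat.split
      simp del: upt_Suc)

lemma succ_chain_cycpow: "h \<in> hes G \<Longrightarrow> succ_chain G (cycpow G h)"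
  using succ_chain_cycpow_snoc[of h] by (simp add: successively_append_iff)

lemma set_cycpow: "h \<in> hes G \<Longrightarrow> x \<in> set (cycpow G h) \<Longrightarrow> x \<in> hes G \<and> vtx G x = vtx G h"
  using set_cycpow_snoc[of h x] by simp

lemma cycpow_length_ge_2:
  assumes h: "h \<in> hes G" and nt: "\<not> trunc G h"
  shows "2 \<le> length (cycpow G h)"
proof -
  have "bgraph.mult G (vtx G h) * valency G (vtx G h) \<noteq> 1"
    using nt unfolding trunc_def by (cases "valency G (vtx G h) = 1") simp_all
  moreover have "bgraph.mult G (vtx G h) * valency G (vtx G h) \<noteq> 0"
    using mult_pos[OF h] valency_pos[OF h] by simp
  ultimately show ?thesis unfolding cycpow_length by linarith
qed

lemma cycpow_inject: "x \<in> hes G \<Longrightarrow> y \<in> hes G \<Longrightarrow> cycpow G x = cycpow G y \<Longrightarrow> x = y"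
  by (metis hd_cycpow)

lemma sublist_cycpow:
  assumes u: "u \<in> hes G" and h: "h \<in> hes G" and sub: "sublist (cycpow G u) (cycpow G h)"
  shows "u = h"
proof -
  have "u \<in> set (cycpow G h)"
    using set_mono_sublist[OF sub] hd_in_set[OF cycpow_ne[OF u]] hd_cycpow[OF u] by auto
  then have "vtx G u = vtx G h" using set_cycpow[OF h] by blast
  then have "length (cycpow G u) = length (cycpow G h)" by (rule cycpow_same_length)
  with sub have "cycpow G u = cycpow G h" by (simp add: sublist_length_ge_imp_eq)
  then show ?thesis using cycpow_inject u h by blast
qed

lemma sublist_cycpow_snoc:
  assumes u: "u \<in> hes G" and h: "h \<in> hes G" and sub: "sublist (cycpow G u) (cycpow G h @ [h])"
  shows "u = h \<or> u = succ G h"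
proof -
  have "u \<in> set (cycpow G h @ [h])"
    using set_mono_sublist[OF sub] hd_in_set[OF cycpow_ne[OF u]] hd_cycpow[OF u] by auto
  then have "vtx G u = vtx G h" using set_cycpow_snoc[OF h] by blast
  then have len: "length (cycpow G u) = length (cycpow G h)" by (rule cycpow_same_length)
  from sub obtain xs ys where split: "cycpow G h @ [h] = xs @ cycpow G u @ ys"
    unfolding sublist_def by blast
  from arg_cong[where f = length, OF split] len have "length xs + length ys = 1" by simp
  then consider "xs = []" "length ys = 1" | x where "xs = [x]" "ys = []"
    by (cases xs) auto
  then show ?thesis
  proof cases
    case 1
    with split len have "cycpow G u = cycpow G h" by (simp add: append_eq_append_conv)
    then show ?thesis using cycpow_inject[OF u h] by blast
  next
    case 2
    with split have "cycpow G u = cycpow G (succ G h)" by (auto simp: cycpow_snoc[OF h])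
    then show ?thesis using cycpow_inject[OF u succ_in_hes[OF h]] by blast
  qed
qed

lemma type3_not_succ:
  assumes t: "type3 G a b"
  shows "b \<noteq> succ G a"
proof
  assume b: "b = succ G a"
  have a: "a \<in> arrows G" using t by (simp add: type3_def)
  then have "2 \<le> length (cycpow G a)" using cycpow_length_ge_2 by (simp add: arrows_def)
  then obtain x y r where xyr: "cycpow G a = x # y # r"
    by (auto simp: numeral_2_eq_2 Suc_le_length_iff)
  have "x = a" using hd_cycpow[of a] a xyr by (simp add: arrows_def)
  moreover have "y = succ G a" using cycpow_nth[of a 1] a xyr by (simp add: arrows_def)
  ultimately have "cycpow G a = [] @ [a, b] @ r" using xyr b by simp
  then have "cyc_subpath G a b" using a unfolding cyc_subpath_def by blast
  then show False using t by (simp add: type3_def)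
qed

lemma hedge_iota: "h \<in> hes G \<Longrightarrow> hedge G (iota G h) = hedge G h"
  by (auto simp: hedge_def iota_iota)

lemma trunc_unique:
  assumes h: "h \<in> hes G" "trunc G h" and x: "x \<in> hes G" "vtx G x = vtx G h"
  shows "x = h"
proof -
  have "card {y \<in> hes G. vtx G y = vtx G h} = 1" using h by (simp add: trunc_def valency_def)
  then obtain z where z: "{y \<in> hes G. vtx G y = vtx G h} = {z}" by (rule card_1_singletonE)
  have "x \<in> {z}" "h \<in> {z}" using h x by (simp_all flip: z)
  then show ?thesis by simp
qed

lemma trunc_both_is_A2:
  assumes h: "h \<in> hes G" and t: "trunc G h" "trunc G (iota G h)"
  shows "is_A2 G"
proof -
  let ?a = "vtx G h" and ?b = "vtx G (iota G h)"
  have ih: "iota G h \<in> hes G" "iota G h \<noteq> h" using h by (simp_all add: iota_in_hes iota_neq)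
  have at_a: "x = h" if "x \<in> hes G" "vtx G x = ?a" for x using trunc_unique[OF h t(1)] that .
  have at_b: "x = iota G h" if "x \<in> hes G" "vtx G x = ?b" for x using trunc_unique[OF ih(1) t(2)] that .
  have ab: "?a \<noteq> ?b" using at_a[OF ih(1)] ih(2) by auto
  have closed: "y \<in> {?a, ?b}" if "(?a, y) \<in> (edge_rel G)\<^sup>*" for y
    using that
  proof (induction rule: rtrancl_induct)
    case (step y z)
    then obtain x where x: "x \<in> hes G" "y = vtx G x" "z = vtx G (iota G x)"
      unfolding edge_rel_def by blast
    from step.IH x have "x = h \<or> x = iota G h" using at_a at_b by auto
    then show ?case using x h by (auto simp: iota_iota)
  qed simp
  have "hes G \<subseteq> {h, iota G h}"
  proof
    fix x assume x: "x \<in> hes G"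
    then have "(?a, vtx G x) \<in> (edge_rel G)\<^sup>*" using bg h unfolding brauer_graph_def by blast
    then have "vtx G x = ?a \<or> vtx G x = ?b" using closed by blast
    then show "x \<in> {h, iota G h}" using at_a at_b x by auto
  qed
  then have "hes G = {h, iota G h}" using h ih by blast
  then show ?thesis using ih ab h by (auto simp: is_A2_def iota_iota)
qed

section \<open>Brauer graph relations in a minimal generating set\<close>

lemma brauer_relation_support:
  assumes r: "r \<in> brauer_relations G q" and nz: "r p \<noteq> 0"
  obtains (type1) u where "u \<in> hes G" "\<not> trunc G u" "\<not> trunc G (iota G u)"
      "r = rel1 G q u \<or> r = rel1 G q (iota G u)" "snd p = cycpow G u"
  | (type2) h where "h \<in> hes G" "trunc G h" "r = rel2 G h"
      "snd p = cycpow G (iota G h) @ [iota G h]"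
  | (type3) a b where "type3 G a b" "r = rel3 G a b" "snd p = [a, b]"
proof -
  from r consider
      (one) t where "r = rel1 G q t" "t \<in> hes G" "\<not> trunc G t" "\<not> trunc G (iota G t)"
    | (two) t where "r = rel2 G t" "t \<in> hes G" "trunc G t"
    | (three) a b where "r = rel3 G a b" "type3 G a b"
    unfolding brauer_relations_def by blast
  then show thesis
  proof cases
    case one
    from nz one(1) have "snd p = cycpow G t \<or> snd p = cycpow G (iota G t)"
      by (auto simp: rel1_def pvec_def split: if_splits)
    then show ?thesis
    proof
      assume "snd p = cycpow G t"
      with one show ?thesis by (intro type1[of t]) simp_all
    next
      assume "snd p = cycpow G (iota G t)"
      with one show ?thesis by (intro type1[of "iota G t"]) (simp_all add: iota_iota iota_in_hes)
    qed
  next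
    case two
    from nz two(1) have "snd p = cycpow G (iota G t) @ [iota G t]"
      by (auto simp: rel2_def pvec_def split: if_splits)
    with two show ?thesis by (intro type2[of t]) simp_all
  next
    case three
    from nz three(1) have "snd p = [a, b]" by (auto simp: rel3_def pvec_def split: if_splits)
    with three show ?thesis by (intro type3[of a b]) simp_all
  qed
qed

lemma type3_iota_succ:
  assumes b: "b \<in> arrows G" and s': "iota G (succ G b) \<in> arrows G"
  shows "type3 G b (iota G (succ G b))"
proof -
  have s: "succ G b \<in> hes G" using b by (simp add: arrows_def succ_in_hes)
  have "\<not> cyc_subpath G b (iota G (succ G b))"
  proof
    assume "cyc_subpath G b (iota G (succ G b))"
    then obtain g xs ys where g: "g \<in> arrows G" "cycpow G g = xs @ [b, iota G (succ G b)] @ ys"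
      unfolding cyc_subpath_def by blast
    then have "sublist [b, iota G (succ G b)] (cycpow G g)" by (simp only: sublist_appendI)
    moreover have "succ_chain G (cycpow G g)" using g(1) by (simp add: arrows_def succ_chain_cycpow)
    ultimately have "iota G (succ G b) = succ G b" by (intro succ_chain_sublist_pair)
    then show False using iota_neq[OF s] by simp
  qed
  then show ?thesis using b s' by (simp add: type3_def hedge_iota[OF s])
qed

lemma rel1_in_minimal_generating_set:
  assumes qz: "quantizing G q" and mg: "minimal_generating_set G q \<rho>"
    and h: "h \<in> hes G" "\<not> trunc G h" "\<not> trunc G (iota G h)"
  shows "rel1 G q h \<in> \<rho> \<or> rel1 G q (iota G h) \<in> \<rho>"
proof -
  have vanish: "\<forall>s\<in>brauer_relations G q - {rel1 G q h, rel1 G q (iota G h)}.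
          \<forall>p. sublist (snd p) (cycpow G h) \<longrightarrow> s p = 0"
  proof (intro ballI allI impI, rule ccontr)
    fix s p
    assume s: "s \<in> brauer_relations G q - {rel1 G q h, rel1 G q (iota G h)}"
      and sub: "sublist (snd p) (cycpow G h)" and "s p \<noteq> 0"
    from s have "s \<in> brauer_relations G q" by blast
    from this \<open>s p \<noteq> 0\<close> show False
    proof (cases rule: brauer_relation_support)
      case (type1 u)
      with sub have "u = h" using sublist_cycpow[OF _ h(1)] by simp
      with type1 s show False by auto
    next
      case (type2 t)
      have "iota G t \<in> set (cycpow G h)" using set_mono_sublist[OF sub] type2(4) by auto
      then have "vtx G (iota G t) = vtx G h" using set_cycpow[OF h(1)] by simp
      then have "length (cycpow G (iota G t)) = length (cycpow G h)" by (rule cycpow_same_length)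
      with sub type2(4) show False by (auto dest: sublist_length_le)
    next
      case (type3 a b)
      with sub have "b = succ G a" using succ_chain_sublist_pair[OF succ_chain_cycpow[OF h(1)]] by simp
      with type3_not_succ[OF type3(1)] show False by simp
    qed
  qed
  have r: "rel1 G q h \<in> brauer_relations G q" using h unfolding brauer_relations_def by blast
  have nz: "rel1 G q h (hedge G h, cycpow G h) \<noteq> 0"
  proof -
    have "cycpow G h \<noteq> cycpow G (iota G h)"
      using cycpow_inject[OF h(1) iota_in_hes[OF h(1)]] iota_neq[OF h(1)] by metis
    moreover have "q h \<noteq> 0" using qz h by (simp add: quantizing_def)
    ultimately show ?thesis by (simp add: rel1_def pvec_def)
  qed
  from mg have "gen_ideal G \<rho> = gen_ideal G (brauer_relations G q)" "\<rho> \<subseteq> brauer_relations G q"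
    by (simp_all add: minimal_generating_set_def)
  from gen_ideal_eq_generator_meets[OF this r nz vanish] show ?thesis by blast
qed

lemma rel3_in_minimal_generating_set:
  assumes mg: "minimal_generating_set G q \<rho>" and ab: "type3 G a b"
  shows "rel3 G a b \<in> \<rho>"
proof -
  have vanish: "\<forall>s\<in>brauer_relations G q - {rel3 G a b}. \<forall>p. sublist (snd p) [a, b] \<longrightarrow> s p = 0"
  proof (intro ballI allI impI, rule ccontr)
    fix s p
    assume s: "s \<in> brauer_relations G q - {rel3 G a b}"
      and sub: "sublist (snd p) [a, b]" and "s p \<noteq> 0"
    from s have "s \<in> brauer_relations G q" by blast
    from this \<open>s p \<noteq> 0\<close> show False
    proof (cases rule: brauer_relation_support)
      case (type1 u)
      have "2 \<le> length (snd p)" using cycpow_length_ge_2[OF type1(1,2)] type1(5) by simp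
      with sub have "snd p = [a, b]" by (simp add: sublist_length_ge_imp_eq)
      moreover have "succ_chain G (snd p)" using succ_chain_cycpow[OF type1(1)] type1(5) by simp
      ultimately have "b = succ G a" by simp
      with type3_not_succ[OF ab] show False by simp
    next
      case (type2 t)
      have "2 \<le> length (snd p)" using cycpow_ne[OF iota_in_hes[OF type2(1)]] type2(4)
        by (simp add: Suc_le_eq)
      with sub have "snd p = [a, b]" by (simp add: sublist_length_ge_imp_eq)
      moreover have "succ_chain G (snd p)"
        using succ_chain_cycpow_snoc[OF iota_in_hes[OF type2(1)]] type2(4) by simp
      ultimately have "b = succ G a" by simp
      with type3_not_succ[OF ab] show False by simp
    next
      case (type3 a' b')
      with sub have "[a', b'] = [a, b]" by (intro sublist_length_ge_imp_eq) simp_all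
      with type3 s show False by simp
    qed
  qed
  have r: "rel3 G a b \<in> brauer_relations G q" using ab unfolding brauer_relations_def by blast
  have nz: "rel3 G a b (hedge G a, [a, b]) \<noteq> 0" by (simp add: rel3_def pvec_def)
  from mg have "gen_ideal G \<rho> = gen_ideal G (brauer_relations G q)" "\<rho> \<subseteq> brauer_relations G q"
    by (simp_all add: minimal_generating_set_def)
  from gen_ideal_eq_generator_meets[OF this r nz vanish] show ?thesis by blast
qed

lemma rel2_in_minimal_generating_set:
  assumes mg: "minimal_generating_set G q \<rho>"
    and h: "h \<in> hes G" "trunc G h" and succ_trunc: "trunc G (iota G (succ G (iota G h)))"
  shows "rel2 G h \<in> \<rho>"
proof -
  let ?b = "iota G h"
  have b: "?b \<in> hes G" "iota G ?b = h" using h by (simp_all add: iota_in_hes iota_iota)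
  have vanish: "\<forall>s\<in>brauer_relations G q - {rel2 G h}.
      \<forall>p. sublist (snd p) (cycpow G ?b @ [?b]) \<longrightarrow> s p = 0"
  proof (intro ballI allI impI, rule ccontr)
    fix s p
    assume s: "s \<in> brauer_relations G q - {rel2 G h}"
      and sub: "sublist (snd p) (cycpow G ?b @ [?b])" and "s p \<noteq> 0"
    from s have "s \<in> brauer_relations G q" by blast
    from this \<open>s p \<noteq> 0\<close> show False
    proof (cases rule: brauer_relation_support)
      case (type1 u)
      with sub have "u = ?b \<or> u = succ G ?b" using sublist_cycpow_snoc[OF type1(1) b(1)] by simp
      with type1(3) h(2) succ_trunc b(2) show False by auto
    next
      case (type2 t)
      have "iota G t \<in> set (snd p)" using type2(4) by simp
      then have "iota G t \<in> set (cycpow G ?b @ [?b])" using set_mono_sublist[OF sub] by blast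
      then have "vtx G (iota G t) = vtx G ?b" using set_cycpow_snoc[OF b(1)] by blast
      then have "length (cycpow G (iota G t)) = length (cycpow G ?b)" by (rule cycpow_same_length)
      with sub type2(4) have "cycpow G (iota G t) = cycpow G ?b"
        by (auto dest: sublist_length_ge_imp_eq)
      then have "iota G t = ?b" by (rule cycpow_inject[OF iota_in_hes[OF type2(1)] b(1)])
      then have "t = h" using iota_iota[OF type2(1)] b(2) by metis
      with type2(3) s show False by simp
    next
      case (type3 a c)
      with sub have "c = succ G a" using succ_chain_sublist_pair[OF succ_chain_cycpow_snoc[OF b(1)]] by simp
      with type3_not_succ[OF type3(1)] show False by simp
    qed
  qed
  have r: "rel2 G h \<in> brauer_relations G q" using h unfolding brauer_relations_def by blast
  have nz: "rel2 G h (hedge G h, cycpow G ?b @ [?b]) \<noteq> 0" by (simp add: rel2_def pvec_def)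
  from mg have "gen_ideal G \<rho> = gen_ideal G (brauer_relations G q)" "\<rho> \<subseteq> brauer_relations G q"
    by (simp_all add: minimal_generating_set_def)
  from gen_ideal_eq_generator_meets[OF this r nz vanish] show ?thesis by blast
qed

lemma set_cycpow_arrows:
  assumes h: "h \<in> hes G" "\<not> trunc G h"
  shows "set (cycpow G h) \<subseteq> arrows G"
proof
  fix x assume "x \<in> set (cycpow G h)"
  then have "x \<in> hes G" "vtx G x = vtx G h" using set_cycpow[OF h(1)] by blast+
  then show "x \<in> arrows G" using h(2) trunc_cong_vtx[of G x h] by (simp add: arrows_def)
qed

lemma valid_path_cycpow:
  "h \<in> hes G \<Longrightarrow> \<not> trunc G h \<Longrightarrow> valid_path G (hedge G h, cycpow G h)"
  using valid_path_succ_chain[OF cycpow_ne succ_chain_cycpow set_cycpow_arrows]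
  by (simp add: hd_cycpow)

lemma cycpow_eq_Cons_tl: "h \<in> hes G \<Longrightarrow> cycpow G h = h # tl (cycpow G h)"
  using cycpow_ne hd_cycpow by (metis list.collapse)

lemma valid_path_tl_cycpow:
  assumes h: "h \<in> hes G" "\<not> trunc G h"
  shows "valid_path G (hedge G (succ G h), tl (cycpow G h))"
proof -
  have ne: "tl (cycpow G h) \<noteq> []" using cycpow_length_ge_2[OF h] by (cases "cycpow G h") auto
  have "succ_chain G (h # tl (cycpow G h))"
    using succ_chain_cycpow[OF h(1)] by (subst (asm) cycpow_eq_Cons_tl[OF h(1)])
  then have chain: "hd (tl (cycpow G h)) = succ G h \<and> succ_chain G (tl (cycpow G h))"
    using ne unfolding successively_Cons by blast
  have "set (cycpow G h) = insert h (set (tl (cycpow G h)))"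
    by (subst cycpow_eq_Cons_tl[OF h(1)]) simp
  then have "set (tl (cycpow G h)) \<subseteq> arrows G" using set_cycpow_arrows[OF h] by blast
  from valid_path_succ_chain[OF ne conjunct2[OF chain] this] chain show ?thesis by simp
qed

lemma pmult_arrow_rel1:
  assumes b: "b \<in> arrows G"
    and s: "\<not> trunc G (succ G b)" and s': "\<not> trunc G (iota G (succ G b))"
  shows "pmult G (pvec (hedge G b, [b])) (rel1 G q (succ G b)) =
    (\<lambda>p. q (succ G b) * pvec (hedge G b, b # cycpow G (succ G b)) p
       - q (iota G (succ G b)) * pvec (hedge G b, b # cycpow G (iota G (succ G b))) p)"
proof -
  have hs: "succ G b \<in> hes G" using b by (simp add: arrows_def succ_in_hes)
  have "valid_path G (hedge G b, b # cycpow G u)"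
    if "u \<in> hes G" "\<not> trunc G u" "hedge G u = hedge G (succ G b)" for u
    using valid_path_Cons[OF b] valid_path_cycpow[OF that(1,2)] that(3) by simp
  then have "valid_path G (hedge G b, b # cycpow G (succ G b))"
    "valid_path G (hedge G b, b # cycpow G (iota G (succ G b)))"
    using hs s s' by (simp_all add: iota_in_hes hedge_iota)
  then show ?thesis
    unfolding rel1_def pmult_diff_right pmult_scale_right pmult_pvec_pvec by (simp add: ptgt_def)
qed

lemma pmult_rel3_tl_cycpow:
  assumes b: "b \<in> arrows G" and s': "s' \<in> hes G" "\<not> trunc G s'" "hedge G s' = hedge G (succ G b)"
  shows "pmult G (rel3 G b s') (pvec (hedge G (succ G s'), tl (cycpow G s'))) =
    pvec (hedge G b, b # cycpow G s')"
proof -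
  have "valid_path G (hedge G b, b # cycpow G s')"
    using valid_path_Cons[OF b] valid_path_cycpow[OF s'(1,2)] s'(3) by simp
  then show ?thesis
    by (simp add: rel3_def pmult_pvec_pvec ptgt_def flip: cycpow_eq_Cons_tl[OF s'(1)])
qed

lemma rel2_in_gen_ideal:
  fixes q :: "'h \<Rightarrow> 'k::field"
  assumes qz: "quantizing G q" and h: "h \<in> hes G" "trunc G h"
    and b_nt: "\<not> trunc G (iota G h)" and s'_nt: "\<not> trunc G (iota G (succ G (iota G h)))"
    and c: "c \<noteq> 0"
  shows "rel2 G h \<in> gen_ideal G {\<lambda>p. c * rel1 G q (succ G (iota G h)) p,
                                    rel3 G (iota G h) (iota G (succ G (iota G h)))}"
    (is "_ \<in> gen_ideal G {?R1, ?R3}")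
proof -
  define b where "b = iota G h"
  define s where "s = succ G b"
  define s' where "s' = iota G s"
  have b: "b \<in> arrows G" "hedge G b = hedge G h"
    using h b_nt by (simp_all add: b_def arrows_def iota_in_hes hedge_iota)
  have s: "s \<in> hes G" "\<not> trunc G s" "iota G s = s'"
    using b trunc_cong_vtx[OF vtx_succ, of b] by (simp_all add: s_def s'_def succ_in_hes arrows_def)
  have s': "s' \<in> hes G" "\<not> trunc G s'" "hedge G s' = hedge G (succ G b)"
    using s s'_nt by (simp_all add: s'_def b_def s_def iota_in_hes hedge_iota)
  have qs: "q s \<noteq> 0" "q s' \<noteq> 0"
    using qz s s' by (auto simp: quantizing_def s'_def iota_iota)
  have gens: "?R1 = (\<lambda>p. c * rel1 G q s p)" "?R3 = rel3 G b s'" by (simp_all add: b_def s_def s'_def)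
  define Y1 where "Y1 = pmult G (\<lambda>p. (1 / (c * q s)) * pvec (hedge G b, [b]) p) (\<lambda>p. c * rel1 G q s p)"
  define Y3 where "Y3 = pmult G (rel3 G b s') (\<lambda>p. (q s' / q s) * pvec (hedge G (succ G s'), tl (cycpow G s')) p)"
  have "Y1 \<in> gen_ideal G {?R1, ?R3}" unfolding Y1_def gens
    by (intro gen_ideal.lmult gen_ideal.gen KQ_scaled_pvec valid_path_succ_chain[of "[b]", simplified] b) simp
  moreover have "Y3 \<in> gen_ideal G {?R1, ?R3}" unfolding Y3_def gens
    by (intro gen_ideal.rmult gen_ideal.gen KQ_scaled_pvec valid_path_tl_cycpow s') simp
  moreover have "(\<lambda>p. Y1 p + Y3 p) = rel2 G h"
  proof -
    have "Y1 = (\<lambda>p. (1 / (c * q s)) * (c * (q s * pvec (hedge G b, b # cycpow G s) p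
        - q s' * pvec (hedge G b, b # cycpow G s') p)))"
      unfolding Y1_def pmult_scale_left pmult_scale_right s_def s'_def
        pmult_arrow_rel1[OF b(1) s(2)[unfolded s_def] s'(2)[unfolded s'_def s_def]] ..
    also have "\<dots> = (\<lambda>p. pvec (hedge G b, b # cycpow G s) p
        - (q s' / q s) * pvec (hedge G b, b # cycpow G s') p)"
      using c qs by (simp add: fun_eq_iff field_simps)
    moreover have "Y3 = (\<lambda>p. (q s' / q s) * pvec (hedge G b, b # cycpow G s') p)"
      unfolding Y3_def pmult_scale_right pmult_rel3_tl_cycpow[OF b(1) s'] ..
    moreover have "pvec (hedge G b, b # cycpow G s) = rel2 G h"
      using b h by (simp add: rel2_def cycpow_snoc s_def b_def iota_in_hes)
    ultimately show ?thesis by simp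
  qed
  ultimately show ?thesis by (metis gen_ideal.add)
qed

lemma rel1_iota: "h \<in> hes G \<Longrightarrow> rel1 G q (iota G h) = (\<lambda>p. - rel1 G q h p)"
  by (simp add: rel1_def iota_iota hedge_iota fun_eq_iff)

lemma succ_trunc_if_rel2_in_minimal_generating_set:
  fixes q :: "'h \<Rightarrow> 'k::field"
  assumes qz: "quantizing G q" and not_A2: "\<not> is_A2 G" and mg: "minimal_generating_set G q \<rho>"
    and h: "h \<in> hes G" "trunc G h" and r2: "rel2 G h \<in> \<rho>"
  shows "trunc G (iota G (succ G (iota G h)))"
proof (rule ccontr)
  let ?b = "iota G h"
  let ?s = "succ G ?b"
  let ?s' = "iota G ?s"
  assume s'_nt: "\<not> trunc G ?s'"
  have b: "?b \<in> hes G" "\<not> trunc G ?b"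
    using h trunc_both_is_A2[OF h] not_A2 by (auto simp: iota_in_hes)
  have s: "?s \<in> hes G" "vtx G ?s = vtx G ?b" "\<not> trunc G ?s"
    using b trunc_cong_vtx[OF vtx_succ[OF b(1)]] by (simp_all add: succ_in_hes vtx_succ)
  obtain c where c: "c \<noteq> 0" "(\<lambda>p. c * rel1 G q ?s p) \<in> \<rho>"
  proof -
    have "rel1 G q ?s \<in> \<rho> \<or> (\<lambda>p. - rel1 G q ?s p) \<in> \<rho>"
      using rel1_in_minimal_generating_set[OF qz mg s(1,3) s'_nt] by (simp add: rel1_iota s(1))
    then show thesis using that[of 1] that[of "-1"] by auto
  qed
  have R1: "(\<lambda>p. c * rel1 G q ?s p) \<noteq> rel2 G h"
  proof
    assume eq: "(\<lambda>p. c * rel1 G q ?s p) = rel2 G h"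
    have "cycpow G ?s \<noteq> cycpow G ?s'"
      using cycpow_inject[OF s(1) iota_in_hes[OF s(1)]] iota_neq[OF s(1)] by metis
    then have "rel2 G h (hedge G ?s, cycpow G ?s) = c * q ?s"
      using fun_cong[OF eq[symmetric], of "(hedge G ?s, cycpow G ?s)"] by (simp add: rel1_def pvec_def)
    moreover have "rel2 G h (hedge G ?s, cycpow G ?s) = (0::'k)"
      using rel2_short_path[of "(hedge G ?s, cycpow G ?s)" G h] cycpow_same_length[OF s(2)] by simp
    moreover have "q ?s \<noteq> 0" using qz s s'_nt by (simp add: quantizing_def)
    ultimately show False using c(1) by simp
  qed
  have R3: "rel3 G ?b ?s' \<noteq> (rel2 G h :: _ \<Rightarrow> 'k)"
  proof
    assume eq: "rel3 G ?b ?s' = (rel2 G h :: _ \<Rightarrow> 'k)"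
    have "rel2 G h (hedge G ?b, [?b, ?s']) = (0::'k)"
      using rel2_short_path[of "(hedge G ?b, [?b, ?s'])" G h] cycpow_length_ge_2[OF b] by simp
    with fun_cong[OF eq, of "(hedge G ?b, [?b, ?s'])"] show False by (simp add: rel3_def pvec_def)
  qed
  have "rel3 G ?b ?s' \<in> \<rho>"
    using rel3_in_minimal_generating_set[OF mg type3_iota_succ] b s'_nt s(1)
    by (simp add: arrows_def iota_in_hes)
  with c(2) R1 R3 have "{\<lambda>p. c * rel1 G q ?s p, rel3 G ?b ?s'} \<subseteq> \<rho> - {rel2 G h}" by simp
  then have "rel2 G h \<in> gen_ideal G (\<rho> - {rel2 G h})"
    using gen_ideal_mono rel2_in_gen_ideal[OF qz h b(2) s'_nt c(1)] by blast
  with minimal_generating_set_irredundant[OF mg r2] show False by contradiction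
qed

end

theorem lemma2p1:
  fixes G :: "('h, 'v) bgraph" and q :: "'h \<Rightarrow> 'k::field"
    and \<rho> :: "('h set \<times> 'h list \<Rightarrow> 'k) set"
  assumes "brauer_graph G" and "quantizing G q" and "\<not> is_A2 G"
    and "minimal_generating_set G q \<rho>"
  shows "(\<forall>h\<in>hes G. \<not> trunc G h \<and> \<not> trunc G (iota G h) \<longrightarrow>
            rel1 G q h \<in> \<rho> \<or> rel1 G q (iota G h) \<in> \<rho>)
       \<and> (\<forall>a b. type3 G a b \<longrightarrow> rel3 G a b \<in> \<rho>)
       \<and> (\<forall>h\<in>hes G. trunc G h \<longrightarrow>
            (rel2 G h \<in> \<rho> \<longleftrightarrow> trunc G (iota G (succ G (iota G h)))))"
proof (intro conjI ballI allI impI)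
  fix h assume "h \<in> hes G" "\<not> trunc G h \<and> \<not> trunc G (iota G h)"
  then show "rel1 G q h \<in> \<rho> \<or> rel1 G q (iota G h) \<in> \<rho>"
    using rel1_in_minimal_generating_set[OF assms(1,2,4)] by blast
next
  fix a b assume "type3 G a b"
  then show "rel3 G a b \<in> \<rho>" by (rule rel3_in_minimal_generating_set[OF assms(1,4)])
next
  fix h assume "h \<in> hes G" "trunc G h"
  then show "rel2 G h \<in> \<rho> \<longleftrightarrow> trunc G (iota G (succ G (iota G h)))"
    using rel2_in_minimal_generating_set[OF assms(1,4)]
      succ_trunc_if_rel2_in_minimal_generating_set[OF assms] by blast
qed

end
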